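(* Let $\mathfrak{g}$ be a nilpotent Lie algebra over $\mathbb{R}$ of dimension $2p+1$ admitting a contact form, i.e. a linear form $\omega\in\mathfrak{g}^*$ with $\omega\wedge(d\omega)^p\neq 0$, where $d\omega(X,Y)=-\omega([X,Y])$. Then the quotient Lie algebra $\mathfrak{g}/Z(\mathfrak{g})$ (where $Z(\mathfrak{g})$ is the center of $\mathfrak{g}$) is a symplectic Lie algebra.
   Context: A symplectic Lie algebra is a Lie algebra $\mathfrak{h}$ equipped with a nondegenerate skew-symmetric bilinear form $\theta$ which is a $2$-cocycle, i.e. $\theta([X,Y],Z)+\theta([Y,Z],X)+\theta([Z,X],Y)=0$ for all $X,Y,Z\in\mathfrak{h}$. *)

theory Defs
  imports "HOL-Analysis.Analysis"
begin

definition lie_algebra :: "('a::real_vector \<Rightarrow> 'a \<Rightarrow> 'a) \<Rightarrow> bool" where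
  "lie_algebra br \<longleftrightarrow>
     (\<forall>x y z. br (x + y) z = br x z + br y z) \<and>
     (\<forall>x y z. br x (y + z) = br x y + br x z) \<and>
     (\<forall>c x y. br (c *\<^sub>R x) y = c *\<^sub>R br x y) \<and>
     (\<forall>c x y. br x (c *\<^sub>R y) = c *\<^sub>R br x y) \<and>
     (\<forall>x. br x x = 0) \<and>
     (\<forall>x y z. br x (br y z) + br y (br z x) + br z (br x y) = 0)"

fun lower_central :: "('a::real_vector \<Rightarrow> 'a \<Rightarrow> 'a) \<Rightarrow> nat \<Rightarrow> 'a set" where
  "lower_central br 0 = UNIV"
| "lower_central br (Suc k) = span {br x y | x y. y \<in> lower_central br k}"

definition nilpotent_lie :: "('a::real_vector \<Rightarrow> 'a \<Rightarrow> 'a) \<Rightarrow> bool" where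
  "nilpotent_lie br \<longleftrightarrow> (\<exists>k. lower_central br k = {0})"

definition lie_center :: "('a::real_vector \<Rightarrow> 'a \<Rightarrow> 'a) \<Rightarrow> 'a set" where
  "lie_center br = {z. \<forall>x. br z x = 0}"

definition d_form :: "('a \<Rightarrow> 'a \<Rightarrow> 'a) \<Rightarrow> ('a \<Rightarrow> real) \<Rightarrow> 'a \<Rightarrow> 'a \<Rightarrow> real" where
  "d_form br \<omega> X Y = - \<omega> (br X Y)"

text \<open>The (2p+1)-form \<omega> \<and> (d\<omega>)^p evaluated on vectors v 0, ..., v (2p),
  via the shuffle formula (up to the positive normalisation constant p! 2^p,
  which is irrelevant for nonvanishing).\<close>
definition contact_top_form ::
  "('a \<Rightarrow> 'a \<Rightarrow> 'a) \<Rightarrow> ('a \<Rightarrow> real) \<Rightarrow> nat \<Rightarrow> (nat \<Rightarrow> 'a) \<Rightarrow> real" where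
  "contact_top_form br \<omega> p v =
     (\<Sum>\<sigma> | \<sigma> permutes {0..2*p}.
        of_int (sign \<sigma>) * \<omega> (v (\<sigma> 0)) *
        (\<Prod>i\<in>{1..p}. d_form br \<omega> (v (\<sigma> (2*i - 1))) (v (\<sigma> (2*i)))))"

definition is_contact_form ::
  "('a::real_vector \<Rightarrow> 'a \<Rightarrow> 'a) \<Rightarrow> nat \<Rightarrow> ('a \<Rightarrow> real) \<Rightarrow> bool" where
  "is_contact_form br p \<omega> \<longleftrightarrow> linear \<omega> \<and> (\<exists>v. contact_top_form br \<omega> p v \<noteq> 0)"

text \<open>Quotient by a subspace Z: elements are the cosets x + Z.\<close>
definition coset :: "'a set \<Rightarrow> 'a::real_vector \<Rightarrow> 'a set" where
  "coset Z x = (\<lambda>z. x + z) ` Z"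

text \<open>A symplectic form on the quotient Lie algebra g/Z, with its operations
  induced from g: (x+Z)+(y+Z) = (x+y)+Z, c(x+Z) = cx+Z, [x+Z,y+Z] = [x,y]+Z.\<close>
definition symplectic_quotient ::
  "('a::real_vector \<Rightarrow> 'a \<Rightarrow> 'a) \<Rightarrow> 'a set \<Rightarrow> ('a set \<Rightarrow> 'a set \<Rightarrow> real) \<Rightarrow> bool" where
  "symplectic_quotient br Z \<theta> \<longleftrightarrow>
     (\<forall>x y z. \<theta> (coset Z (x + y)) (coset Z z) = \<theta> (coset Z x) (coset Z z) + \<theta> (coset Z y) (coset Z z)) \<and>
     (\<forall>c x y. \<theta> (coset Z (c *\<^sub>R x)) (coset Z y) = c * \<theta> (coset Z x) (coset Z y)) \<and>
     (\<forall>x y. \<theta> (coset Z x) (coset Z y) = - \<theta> (coset Z y) (coset Z x)) \<and>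
     (\<forall>x. (\<forall>y. \<theta> (coset Z x) (coset Z y) = 0) \<longrightarrow> coset Z x = coset Z 0) \<and>
     (\<forall>x y z. \<theta> (coset Z (br x y)) (coset Z z) + \<theta> (coset Z (br y z)) (coset Z x)
              + \<theta> (coset Z (br z x)) (coset Z y) = 0)"

definition symplectic_quotient_lie :: "('a::real_vector \<Rightarrow> 'a \<Rightarrow> 'a) \<Rightarrow> 'a set \<Rightarrow> bool" where
  "symplectic_quotient_lie br Z \<longleftrightarrow> (\<exists>\<theta>. symplectic_quotient br Z \<theta>)"

end

theory Submission
  imports Defs
begin

text \<open>
  Since \<omega> \<and> (d\<omega>)^p \<noteq> 0, no nonzero k satisfies \<omega> k = 0 and \<omega>([k, -]) = 0: projecting
  all arguments of \<omega> \<and> (d\<omega>)^p along such a k onto a hyperplane complementary to k would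
  leave its value unchanged, while 2p+1 vectors in a 2p-dimensional space make an
  alternating multilinear form vanish. Nilpotency yields a nonzero central z, which
  therefore has \<omega> z \<noteq> 0. If \<omega>([x, -]) = 0, then x - (\<omega> x / \<omega> z) z is such a k, so x is
  a multiple of z and lies in the center. Thus the radical of the 2-cocycle
  (x, y) \<mapsto> \<omega>([x, y]) is exactly the center, and the cocycle descends to a symplectic
  form on g/Z(g).
\<close>

lemma lie_algebra_bilinear: "lie_algebra br \<Longrightarrow> bilinear br"
  unfolding lie_algebra_def bilinear_def by (auto intro!: linearI)

lemma lie_algebra_anticomm:
  assumes "lie_algebra br"
  shows "br y x = - br x y"
proof -
  have bil: "bilinear br" and alt: "\<And>x. br x x = 0"
    using assms lie_algebra_bilinear unfolding lie_algebra_def by blast+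
  have "0 = br (x + y) (x + y)" using alt by simp
  also have "\<dots> = br y x + br x y"
    unfolding bilinear_ladd[OF bil] bilinear_radd[OF bil] alt[of x] alt[of y] by simp
  finally show ?thesis by (metis eq_neg_iff_add_eq_0)
qed

lemma lie_center_subspace:
  assumes "lie_algebra br"
  shows "subspace (lie_center br)"
  using lie_algebra_bilinear[OF assms] unfolding subspace_def lie_center_def
  by (simp add: bilinear_lzero bilinear_ladd bilinear_lmul)

lemma d_form_bilinear:
  assumes "lie_algebra br" and lw: "linear \<omega>"
  shows "bilinear (d_form br \<omega>)"
proof -
  have bil: "bilinear br" using lie_algebra_bilinear[OF assms(1)] .
  show ?thesis unfolding bilinear_def d_form_def
    by (auto intro!: linearI simp: bilinear_ladd[OF bil] bilinear_radd[OF bil]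
        bilinear_lmul[OF bil] bilinear_rmul[OF bil] linear_add[OF lw] linear_scale[OF lw])
qed

lemma lie_algebra_bracket_cocycle:
  assumes la: "lie_algebra br" and lw: "linear \<omega>"
  shows "\<omega> (br (br x y) z) + \<omega> (br (br y z) x) + \<omega> (br (br z x) y) = 0"
proof -
  have "\<omega> (br (br x y) z) + \<omega> (br (br y z) x) + \<omega> (br (br z x) y)
      = - \<omega> (br z (br x y) + br x (br y z) + br y (br z x))"
    using lie_algebra_anticomm[OF la, of z "br x y"] lie_algebra_anticomm[OF la, of x "br y z"]
      lie_algebra_anticomm[OF la, of y "br z x"]
    by (simp add: linear_add[OF lw] linear_diff[OF lw] linear_neg[OF lw])
  also have "\<dots> = 0"
    using la linear_0[OF lw] unfolding lie_algebra_def by (simp add: add_ac)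
  finally show ?thesis .
qed

lemma coset_eq_iff:
  assumes Z: "subspace Z"
  shows "coset Z x = coset Z y \<longleftrightarrow> y - x \<in> Z"
proof
  assume "coset Z x = coset Z y"
  moreover have "y \<in> coset Z y"
    using subspace_0[OF Z] unfolding coset_def by force
  ultimately obtain z where "z \<in> Z" "y = x + z" unfolding coset_def by auto
  then show "y - x \<in> Z" by simp
next
  assume yx: "y - x \<in> Z"
  show "coset Z x = coset Z y"
    unfolding coset_def
  proof (intro equalityI image_subsetI)
    fix z assume "z \<in> Z"
    show "x + z \<in> (+) y ` Z"
      using subspace_diff[OF Z \<open>z \<in> Z\<close> yx] by (auto intro: image_eqI[where x = "z - (y - x)"])
    show "y + z \<in> (+) x ` Z"
      using subspace_add[OF Z \<open>z \<in> Z\<close> yx] by (auto intro: image_eqI[where x = "z + (y - x)"])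
  qed
qed

definition coset_rep :: "'a set \<Rightarrow> 'a set \<Rightarrow> 'a::real_vector" where
  "coset_rep Z A = (SOME x. A = coset Z x)"

lemma coset_rep_coset:
  assumes "subspace Z"
  shows "coset_rep Z (coset Z x) - x \<in> Z"
proof -
  have "coset Z x = coset Z (coset_rep Z (coset Z x))"
    unfolding coset_rep_def by (rule someI) (rule refl)
  then show ?thesis using coset_eq_iff[OF assms] by blast
qed

lemma symplectic_quotient_lie_centerI:
  fixes br :: "'a::real_vector \<Rightarrow> 'a \<Rightarrow> 'a" and \<omega> :: "'a \<Rightarrow> real"
  assumes la: "lie_algebra br" and lw: "linear \<omega>"
    and radical: "\<And>x. (\<forall>y. \<omega> (br x y) = 0) \<Longrightarrow> x \<in> lie_center br"
  shows "symplectic_quotient_lie br (lie_center br)"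
proof -
  define Z where "Z = lie_center br"
  have Z: "subspace Z" unfolding Z_def by (rule lie_center_subspace[OF la])
  have bil: "bilinear br" by (rule lie_algebra_bilinear[OF la])
  have central: "br a w = 0" "br w a = 0" if "a \<in> Z" for a w
    using that lie_algebra_anticomm[OF la, of a w] by (simp_all add: Z_def lie_center_def)
  define \<theta> where "\<theta> A B = \<omega> (br (coset_rep Z A) (coset_rep Z B))" for A B
  have \<theta>: "\<theta> (coset Z x) (coset Z y) = \<omega> (br x y)" for x y
  proof -
    define a b where "a = coset_rep Z (coset Z x) - x" and "b = coset_rep Z (coset Z y) - y"
    have "a \<in> Z" "b \<in> Z" unfolding a_def b_def by (simp_all add: coset_rep_coset[OF Z])
    moreover have "\<theta> (coset Z x) (coset Z y) = \<omega> (br (x + a) (y + b))"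
      by (simp add: \<theta>_def a_def b_def)
    ultimately show ?thesis
      by (simp add: bilinear_ladd[OF bil] bilinear_radd[OF bil] central)
  qed
  have "symplectic_quotient br Z \<theta>"
    unfolding symplectic_quotient_def \<theta>
  proof (intro conjI allI impI)
    fix x y z c
    show "\<omega> (br (x + y) z) = \<omega> (br x z) + \<omega> (br y z)"
      by (simp add: bilinear_ladd[OF bil] linear_add[OF lw])
    show "\<omega> (br (c *\<^sub>R x) y) = c * \<omega> (br x y)"
      by (simp add: bilinear_lmul[OF bil] linear_scale[OF lw])
    show "\<omega> (br x y) = - \<omega> (br y x)"
      by (simp add: lie_algebra_anticomm[OF la, of x y] linear_neg[OF lw])
    show "\<omega> (br (br x y) z) + \<omega> (br (br y z) x) + \<omega> (br (br z x) y) = 0"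
      by (rule lie_algebra_bracket_cocycle[OF la lw])
  next
    fix x assume "\<forall>y. \<omega> (br x y) = 0"
    then show "coset Z x = coset Z 0"
      using radical Z subspace_neg by (auto simp: coset_eq_iff Z_def)
  qed
  then show ?thesis unfolding symplectic_quotient_lie_def Z_def by blast
qed

definition contact_term :: "('a \<Rightarrow> 'a \<Rightarrow> 'a) \<Rightarrow> ('a \<Rightarrow> real) \<Rightarrow> nat \<Rightarrow> (nat \<Rightarrow> 'a) \<Rightarrow> real" where
  "contact_term br \<omega> p u = \<omega> (u 0) * (\<Prod>i\<in>{1..p}. d_form br \<omega> (u (2*i - 1)) (u (2*i)))"

lemma contact_top_form_altdef:
  "contact_top_form br \<omega> p v =
     (\<Sum>\<sigma> | \<sigma> permutes {0..2*p}. of_int (sign \<sigma>) * contact_term br \<omega> p (v \<circ> \<sigma>))"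
  by (simp add: contact_top_form_def contact_term_def mult.assoc)

lemma linear_prod_single_factor:
  fixes f :: "'i \<Rightarrow> 'a::real_vector \<Rightarrow> real"
  assumes "finite I" "i \<in> I" "linear (f i)" "\<And>j x y. j \<in> I - {i} \<Longrightarrow> f j x = f j y"
  shows "linear (\<lambda>x. \<Prod>j\<in>I. f j x)"
proof -
  have "(\<Prod>j\<in>I. f j x) = (\<Prod>j\<in>I - {i}. f j 0) * f i x" for x
  proof -
    have "(\<Prod>j\<in>I. f j x) = f i x * (\<Prod>j\<in>I - {i}. f j x)"
      using assms(1,2) by (simp add: prod.remove)
    also have "(\<Prod>j\<in>I - {i}. f j x) = (\<Prod>j\<in>I - {i}. f j 0)"
      using assms(4) by (intro prod.cong) auto
    finally show ?thesis by simp
  qed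
  then show ?thesis using linear_compose_scale_right[OF assms(3)] by simp
qed

lemma contact_term_linear_slot:
  assumes la: "lie_algebra br" and lw: "linear \<omega>" and k: "k \<in> {0..2*p}"
  shows "linear (\<lambda>x. contact_term br \<omega> p (u(k := x)))"
proof -
  have bil: "bilinear (d_form br \<omega>)" by (rule d_form_bilinear[OF la lw])
  let ?f = "\<lambda>j x. d_form br \<omega> ((u(k := x)) (2*j - 1)) ((u(k := x)) (2*j))"
  show ?thesis
  proof (cases "k = 0")
    case True
    then have "contact_term br \<omega> p (u(k := x))
        = (\<Prod>j\<in>{1..p}. d_form br \<omega> (u (2*j - 1)) (u (2*j))) * \<omega> x" for x
      unfolding contact_term_def by (auto intro!: prod.cong)
    then show ?thesis using linear_compose_scale_right[OF lw] by simp
  next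
    case False
    define i where "i = (k + 1) div 2"
    have i: "i \<in> {1..p}" "k = 2*i - 1 \<or> k = 2*i" using False k by (auto simp: i_def)
    have lin: "linear (?f i)"
      using i(2)
    proof
      assume "k = 2*i - 1"
      then have "?f i = (\<lambda>x. d_form br \<omega> x (u (2*i)))" using i(1) by (auto simp: fun_eq_iff)
      then show ?thesis using bil by (simp add: bilinear_def)
    next
      assume "k = 2*i"
      then have "?f i = (\<lambda>x. d_form br \<omega> (u (2*i - 1)) x)" using i(1) by (auto simp: fun_eq_iff)
      then show ?thesis using bil by (simp add: bilinear_def)
    qed
    have const: "?f j x = ?f j y" if "j \<in> {1..p} - {i}" for j x y
    proof -
      have "2*j - 1 \<noteq> k" "2*j \<noteq> k" using that i by auto
      then show ?thesis by simp
    qed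
    have prod_lin: "linear (\<lambda>x. \<Prod>j\<in>{1..p}. ?f j x)"
      using i(1) lin const by (intro linear_prod_single_factor[where f = ?f and i = i]) auto
    moreover have "contact_term br \<omega> p (u(k := x)) = \<omega> (u 0) * (\<Prod>j\<in>{1..p}. ?f j x)" for x
      using False by (simp add: contact_term_def)
    ultimately show ?thesis using linear_compose_scale_right[OF prod_lin, of "\<omega> (u 0)"] by simp
  qed
qed

lemma contact_top_form_linear_slot:
  assumes la: "lie_algebra br" and lw: "linear \<omega>" and j: "j \<in> {0..2*p}"
  shows "linear (\<lambda>x. contact_top_form br \<omega> p (v(j := x)))"
proof -
  have "linear (\<lambda>x. of_int (sign \<sigma>) * contact_term br \<omega> p (v(j := x) \<circ> \<sigma>))"
    if \<sigma>: "\<sigma> permutes {0..2*p}" for \<sigma>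
  proof -
    have "v(j := x) \<circ> \<sigma> = (v \<circ> \<sigma>)(inv \<sigma> j := x)" for x
      using permutes_inverses[OF \<sigma>] by (auto simp: fun_eq_iff)
    moreover have "inv \<sigma> j \<in> {0..2*p}"
      using permutes_in_image[OF permutes_inv[OF \<sigma>]] j by simp
    ultimately show ?thesis
      using linear_compose_scale_right[OF contact_term_linear_slot[OF la lw]] by simp
  qed
  then show ?thesis
    unfolding contact_top_form_altdef by (intro linear_compose_sum) auto
qed

lemma contact_top_form_repeated:
  assumes "i \<in> {0..2*p}" "j \<in> {0..2*p}" "i \<noteq> j" "v i = v j"
  shows "contact_top_form br \<omega> p v = 0"
proof -
  let ?S = "{\<sigma>. \<sigma> permutes {0..2*p}}"
  define g where "g \<sigma> = of_int (sign \<sigma>) * contact_term br \<omega> p (v \<circ> \<sigma>)" for \<sigma>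
  define \<tau> where "\<tau> = Transposition.transpose i j"
  have "v (\<tau> m) = v m" for m
    using assms(4) by (cases "m = i"; cases "m = j") (auto simp: \<tau>_def)
  then have \<tau>: "\<tau> permutes {0..2*p}" "v \<circ> \<tau> = v"
    using assms by (auto simp: \<tau>_def permutes_swap_id)
  have g: "g (\<tau> \<circ> \<sigma>) = - g \<sigma>" if "\<sigma> \<in> ?S" for \<sigma>
  proof -
    have "sign (\<tau> \<circ> \<sigma>) = - sign \<sigma>"
      using that assms(3) permutes_imp_permutation[of "{0..2*p}" \<sigma>]
      by (simp add: \<tau>_def sign_compose permutation_swap_id sign_swap_id)
    moreover have "v \<circ> (\<tau> \<circ> \<sigma>) = v \<circ> \<sigma>" by (simp add: comp_assoc[symmetric] \<tau>(2))
    ultimately show ?thesis by (simp add: g_def)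
  qed
  have "sum g ?S = sum (\<lambda>\<sigma>. g (\<tau> \<circ> \<sigma>)) ?S"
    by (rule sum.reindex_bij_witness[where i="(\<circ>) \<tau>" and j="(\<circ>) \<tau>"])
      (use \<tau>(1) in \<open>auto simp: \<tau>_def permutes_compose comp_assoc[symmetric]\<close>)
  also have "\<dots> = - sum g ?S" by (simp add: g sum_negf)
  finally have "sum g ?S = 0" by simp
  then show ?thesis by (simp add: contact_top_form_altdef g_def)
qed

lemma contact_top_form_eq_0_if_dim_le:
  fixes v :: "nat \<Rightarrow> 'a::euclidean_space"
  assumes la: "lie_algebra br" and lw: "linear \<omega>"
    and v: "v ` {0..2*p} \<subseteq> S" and S: "dim S \<le> 2*p"
  shows "contact_top_form br \<omega> p v = 0"
proof (cases "inj_on v {0..2*p}")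
  case False
  then show ?thesis
    unfolding inj_on_def by (metis contact_top_form_repeated)
next
  case True
  let ?U = "v ` {0..2*p}"
  have "\<not> independent ?U"
  proof
    assume "independent ?U"
    then have "card ?U \<le> dim S" using independent_card_le_dim[OF v] by blast
    with S True show False by (simp add: card_image)
  qed
  then obtain j where j: "j \<in> {0..2*p}" and "v j \<in> span (?U - {v j})"
    unfolding dependent_def by blast
  then obtain c where c: "v j = (\<Sum>w\<in>?U - {v j}. c w *\<^sub>R w)"
    using span_finite[of "?U - {v j}"] by auto
  have slot: "linear (\<lambda>x. contact_top_form br \<omega> p (v(j := x)))"
    by (rule contact_top_form_linear_slot[OF la lw j])
  have "contact_top_form br \<omega> p v = contact_top_form br \<omega> p (v(j := \<Sum>w\<in>?U - {v j}. c w *\<^sub>R w))"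
    by (simp flip: c)
  also have "\<dots> = (\<Sum>w\<in>?U - {v j}. c w * contact_top_form br \<omega> p (v(j := w)))"
    by (simp add: linear_sum[OF slot] linear_scale[OF slot])
  also have "\<dots> = 0"
  proof (intro sum.neutral ballI)
    fix w assume w: "w \<in> ?U - {v j}"
    then obtain i where "i \<in> {0..2*p}" "w = v i" by blast
    moreover from this w have "i \<noteq> j" by blast
    ultimately have "contact_top_form br \<omega> p (v(j := w)) = 0"
      using j by (intro contact_top_form_repeated[of i p j]) auto
    then show "c w * contact_top_form br \<omega> p (v(j := w)) = 0" by simp
  qed
  finally show ?thesis .
qed

lemma contact_top_form_shift_by_radical:
  assumes la: "lie_algebra br" and lw: "linear \<omega>"
    and k: "\<omega> k = 0" "\<And>y. \<omega> (br k y) = 0"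
  shows "contact_top_form br \<omega> p (\<lambda>m. v m + c m *\<^sub>R k) = contact_top_form br \<omega> p v"
proof -
  have bil: "bilinear (d_form br \<omega>)" by (rule d_form_bilinear[OF la lw])
  have dk: "d_form br \<omega> k y = 0" "d_form br \<omega> y k = 0" for y
    using k(2)[of y] lie_algebra_anticomm[OF la, of k y] linear_neg[OF lw]
    by (simp_all add: d_form_def)
  have "\<omega> (v m + c m *\<^sub>R k) = \<omega> (v m)" for m
    by (simp add: linear_add[OF lw] linear_scale[OF lw] k(1))
  moreover have "d_form br \<omega> (v a + c a *\<^sub>R k) (v b + c b *\<^sub>R k) = d_form br \<omega> (v a) (v b)" for a b
    by (simp add: bilinear_ladd[OF bil] bilinear_radd[OF bil] bilinear_lmul[OF bil]
        bilinear_rmul[OF bil] dk)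
  ultimately show ?thesis unfolding contact_top_form_def by simp
qed

lemma contact_form_radical_trivial:
  fixes br :: "'a::euclidean_space \<Rightarrow> 'a \<Rightarrow> 'a"
  assumes la: "lie_algebra br" and dim: "DIM('a) = 2*p + 1" and contact: "is_contact_form br p \<omega>"
    and k: "\<omega> k = 0" "\<And>y. \<omega> (br k y) = 0"
  shows "k = 0"
proof (rule ccontr)
  assume "k \<noteq> 0"
  obtain v where lw: "linear \<omega>" and nz: "contact_top_form br \<omega> p v \<noteq> 0"
    using contact unfolding is_contact_form_def by blast
  define u where "u m = v m + (- (k \<bullet> v m) / (k \<bullet> k)) *\<^sub>R k" for m
  have "contact_top_form br \<omega> p u = contact_top_form br \<omega> p v"
    unfolding u_def by (rule contact_top_form_shift_by_radical[OF la lw k])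
  moreover have "contact_top_form br \<omega> p u = 0"
  proof (rule contact_top_form_eq_0_if_dim_le[OF la lw])
    show "u ` {0..2*p} \<subseteq> {x. k \<bullet> x = 0}"
      using \<open>k \<noteq> 0\<close> by (auto simp: u_def inner_diff_right)
    show "dim {x. k \<bullet> x = 0} \<le> 2*p"
      using dim_hyperplane[OF \<open>k \<noteq> 0\<close>] dim by simp
  qed
  ultimately show False using nz by simp
qed

lemma zero_mem_lower_central: "0 \<in> lower_central br k"
  by (cases k) (simp_all add: span_zero)

lemma nilpotent_lie_center_nontrivial:
  fixes br :: "'a::euclidean_space \<Rightarrow> 'a \<Rightarrow> 'a"
  assumes la: "lie_algebra br" and nil: "nilpotent_lie br"
  shows "\<exists>z\<in>lie_center br. z \<noteq> 0"
proof -
  define n where "n = (LEAST n. lower_central br n = {0})"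
  have n: "lower_central br n = {0}"
    using nil unfolding nilpotent_lie_def n_def by (rule LeastI_ex)
  have "lower_central br 0 \<noteq> {0}"
    using nonzero_Basis nonempty_Basis by (metis UNIV_I lower_central.simps(1) singletonD ex_in_conv)
  then obtain m where m: "n = Suc m" using n by (cases n) auto
  then have "lower_central br m \<noteq> {0}"
    using not_less_Least[of m "\<lambda>n. lower_central br n = {0}"] by (simp add: n_def)
  then obtain y where y: "y \<in> lower_central br m" "y \<noteq> 0"
    using zero_mem_lower_central by blast
  have yx: "br x y = 0" for x
  proof -
    have "br x y \<in> lower_central br (Suc m)"
      using y(1) by (auto intro: span_base)
    then show ?thesis using n m by simp
  qed
  have "br y x = 0" for x
    using yx[of x] lie_algebra_anticomm[OF la, of x y] by simp
  then have "y \<in> lie_center br" by (simp add: lie_center_def)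
  with y(2) show ?thesis by blast
qed

lemma contact_nilpotent_radical_subset_center:
  fixes br :: "'a::euclidean_space \<Rightarrow> 'a \<Rightarrow> 'a"
  assumes la: "lie_algebra br" and nil: "nilpotent_lie br"
    and dim: "DIM('a) = 2*p + 1" and contact: "is_contact_form br p \<omega>"
    and x: "\<forall>y. \<omega> (br x y) = 0"
  shows "x \<in> lie_center br"
proof -
  have lw: "linear \<omega>" using contact unfolding is_contact_form_def by blast
  have bil: "bilinear br" by (rule lie_algebra_bilinear[OF la])
  note radical_trivial = contact_form_radical_trivial[OF la dim contact]
  obtain z where z: "z \<in> lie_center br" "z \<noteq> 0"
    using nilpotent_lie_center_nontrivial[OF la nil] by blast
  have bz: "br z y = 0" for y using z(1) by (simp add: lie_center_def)
  have "\<omega> z \<noteq> 0"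
    using radical_trivial[of z] z(2) by (auto simp: bz linear_0[OF lw])
  define c where "c = \<omega> x / \<omega> z"
  have "x - c *\<^sub>R z = 0"
  proof (rule radical_trivial)
    show "\<omega> (x - c *\<^sub>R z) = 0"
      using \<open>\<omega> z \<noteq> 0\<close> by (simp add: c_def linear_diff[OF lw] linear_scale[OF lw])
    show "\<omega> (br (x - c *\<^sub>R z) y) = 0" for y
      using x by (simp add: bilinear_lsub[OF bil] bilinear_lmul[OF bil] bz
          linear_diff[OF lw] linear_scale[OF lw] linear_0[OF lw])
  qed
  then show ?thesis
    using subspace_scale[OF lie_center_subspace[OF la] z(1)] by simp
qed

theorem mainTheorem1:
  fixes br :: "'a::euclidean_space \<Rightarrow> 'a \<Rightarrow> 'a" and p :: nat and \<omega> :: "'a \<Rightarrow> real"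
  assumes "lie_algebra br"
    and "nilpotent_lie br"
    and "DIM('a) = 2 * p + 1"
    and "is_contact_form br p \<omega>"
  shows "symplectic_quotient_lie br (lie_center br)"
proof (rule symplectic_quotient_lie_centerI[OF assms(1)])
  show "linear \<omega>" using assms(4) unfolding is_contact_form_def by blast
  show "x \<in> lie_center br" if "\<forall>y. \<omega> (br x y) = 0" for x
    using contact_nilpotent_radical_subset_center[OF assms that] .
qed

end
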